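(* The typed $\pi$-calculus $\pi$ terminates: if $\Gamma\vdash^{\pi}D$, then there is no infinite reduction sequence $D\to D_1\to D_2\to\cdots$.
   Context: Processes up to $\alpha$-renaming of bound names; $[z^+/y^+]D$ is capture-avoiding substitution of names. Syntax (braces $\{\ldots\}$ mark optional parts): declarations $D::=\nu x\,D\mid\nu x\,(x(y_1,\ldots,y_n).D\mid D)\mid\nu x\,(!x(y_1,\ldots,y_n).D\mid D)\mid M$; terms $M::=\overline{x}(y_1,\ldots,y_n)\mid(M\mid M)$ ($n\ge1$); evaluation contexts $E::=[\,]\mid E[\nu x\,[\,]]\mid E[\nu x\,(\{!\}x(y^+).D\mid[\,])]\mid E[[\,]\mid M]\mid E[M\mid[\,]]$; types $A::=\langle1\rangle\mid\langle A_1,\ldots,A_n\rangle$. Convention: when a declaration is placed in a term position (e.g. in a parallel composition or a context hole), its $\nu$-binders and definitions are moved outward in front (renamed apart). Structural congruence $\equiv$: least equivalence closed under $\alpha$-renaming and the operators with $\nu x_1(\{\{!\}x_1(y_1^+).D_1\mid\}\nu x_2(\{\{!\}x_2(y_2^+).D_2\mid\}D))\equiv\nu x_2(\{\{!\}x_2(y_2^+).D_2\mid\}\nu x_1(\{\{!\}x_1(y_1^+).D_1\mid\}D))$ if $x_1\notin FV(\lambda y_1^+.D_1)$ and $x_2\notin FV(\lambda y_2^+.D_2)$, and $\nu x(\{\{!\}x(y^+).D'\mid\}D)\equiv D$ if $x\notin FV(D)$. Reduction: least relation containing $E[\nu x\,(!x(y^+).D\mid E'[\overline{x}z^+])]\to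 E[\nu x\,(!x(y^+).D\mid E'[[z^+/y^+]D])]$ and $E[\nu x\,(x(y^+).D\mid E'[\overline{x}z^+])]\to E[\nu x\,(E'[[z^+/y^+]D])]$ (with $y^+,z^+$ of equal length), closed under $\equiv$. Typing ($\Gamma$ a finite map from names to types): $\Gamma\vdash^\pi\nu x\,D$ if $\Gamma,x:A\vdash^\pi D$ for some $A$; $\Gamma\vdash^\pi\nu x\,(\{!\}x(y_1,\ldots,y_n).D'\mid D)$ if $\Gamma,y_1:A_1,\ldots,y_n:A_n\vdash^\pi D'$ and $\Gamma,x:\langle A_1,\ldots,A_n\rangle\vdash^\pi D$; $\Gamma\vdash^\pi\overline{x}(y_1,\ldots,y_n)$ if $x:\langle A_1,\ldots,A_n\rangle\in\Gamma$ and $y_i:A_i\in\Gamma$ for all $i$; $\Gamma\vdash^\pi(M_1\mid M_2)$ if $\Gamma\vdash^\pi M_i$ for $i=1,2$. *)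

theory Defs
  imports Main
begin

section \<open>Syntax of the typed pi-calculus (named representation)\<close>

type_synonym name = nat

datatype trm = Out name "name list" | Par trm trm

text \<open>Def b x ys D' D  stands for  nu x (x(ys).D' | D)  (b = False) resp.
   nu x (!x(ys).D' | D)  (b = True).  The name x is bound in D (not in D');
   the names ys are bound in D'.\<close>
datatype dcl = Nu name dcl | Def bool name "name list" dcl dcl | Tm trm

text \<open>A single bndr prefix  nu x [ ]  or  nu x ({!}x(ys).D' | [ ]).\<close>
datatype bndr = BNu name | BDef bool name "name list" dcl

datatype tctx = THole | TParL tctx trm | TParR trm tctx

datatype ty = One | Ch "ty list"

fun bind1 :: "bndr \<Rightarrow> dcl \<Rightarrow> dcl" where
  "bind1 (BNu x) D = Nu x D"
| "bind1 (BDef b x ys D1) D = Def b x ys D1 D"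

definition bind :: "bndr list \<Rightarrow> dcl \<Rightarrow> dcl" where
  "bind Bs D = foldr bind1 Bs D"

fun bnd :: "bndr \<Rightarrow> name" where
  "bnd (BNu x) = x"
| "bnd (BDef b x ys D1) = x"

fun fvt :: "trm \<Rightarrow> name set" where
  "fvt (Out x ys) = insert x (set ys)"
| "fvt (Par M N) = fvt M \<union> fvt N"

fun fv :: "dcl \<Rightarrow> name set" where
  "fv (Nu x D) = fv D - {x}"
| "fv (Def b x ys D1 D2) = (fv D1 - set ys) \<union> (fv D2 - {x})"
| "fv (Tm M) = fvt M"

fun fvb :: "bndr \<Rightarrow> name set" where
  "fvb (BNu x) = {}"
| "fvb (BDef b x ys D1) = fv D1 - set ys"

fun bn :: "dcl \<Rightarrow> name set" where
  "bn (Nu x D) = insert x (bn D)"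
| "bn (Def b x ys D1 D2) = insert x (set ys \<union> bn D1 \<union> bn D2)"
| "bn (Tm M) = {}"

text \<open>Names of the outermost binders of a declaration (those moved outward
  when the declaration is placed in a term position).\<close>
fun topbn :: "dcl \<Rightarrow> name set" where
  "topbn (Nu x D) = insert x (topbn D)"
| "topbn (Def b x ys D1 D2) = insert x (topbn D2)"
| "topbn (Tm M) = {}"

definition swapn :: "name \<Rightarrow> name \<Rightarrow> name \<Rightarrow> name" where
  "swapn a c n = (if n = a then c else if n = c then a else n)"

text \<open>Apply a name function to every name occurrence (free and bound).\<close>
fun mapt :: "(name \<Rightarrow> name) \<Rightarrow> trm \<Rightarrow> trm" where
  "mapt f (Out x ys) = Out (f x) (map f ys)"
| "mapt f (Par M N) = Par (mapt f M) (mapt f N)"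

fun mapd :: "(name \<Rightarrow> name) \<Rightarrow> dcl \<Rightarrow> dcl" where
  "mapd f (Nu x D) = Nu (f x) (mapd f D)"
| "mapd f (Def b x ys D1 D2) = Def b (f x) (map f ys) (mapd f D1) (mapd f D2)"
| "mapd f (Tm M) = Tm (mapt f M)"

text \<open>Substitution of free names (non-renaming; capture is excluded by side
  conditions, which can always be met up to alpha-renaming).\<close>
fun substd :: "(name \<Rightarrow> name) \<Rightarrow> dcl \<Rightarrow> dcl" where
  "substd \<sigma> (Nu x D) = Nu x (substd (\<sigma>(x := x)) D)"
| "substd \<sigma> (Def b x ys D1 D2) =
     Def b x ys (substd (\<lambda>n. if n \<in> set ys then n else \<sigma> n) D1) (substd (\<sigma>(x := x)) D2)"
| "substd \<sigma> (Tm M) = Tm (mapt \<sigma> M)"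

definition sub :: "name list \<Rightarrow> name list \<Rightarrow> name \<Rightarrow> name" where
  "sub ys zs n = (case (Map.empty(ys [\<mapsto>] zs)) n of None \<Rightarrow> n | Some z \<Rightarrow> z)"

section \<open>Contexts and the placement convention\<close>

fun tplug :: "tctx \<Rightarrow> trm \<Rightarrow> trm" where
  "tplug THole M = M"
| "tplug (TParL T N) M = Par (tplug T M) N"
| "tplug (TParR N T) M = Par N (tplug T M)"

fun tfv :: "tctx \<Rightarrow> name set" where
  "tfv THole = {}"
| "tfv (TParL T N) = tfv T \<union> fvt N"
| "tfv (TParR N T) = fvt N \<union> tfv T"

text \<open>Placing a declaration in the hole of a term context: its binders are
  moved outward in front (they must be apart from the context's names).\<close>
fun ext :: "dcl \<Rightarrow> tctx \<Rightarrow> dcl" where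
  "ext (Nu x D) T = Nu x (ext D T)"
| "ext (Def b x ys D1 D2) T = Def b x ys D1 (ext D2 T)"
| "ext (Tm M) T = Tm (tplug T M)"

fun wft :: "trm \<Rightarrow> bool" where
  "wft (Out x ys) = (ys \<noteq> [])"
| "wft (Par M N) = (wft M \<and> wft N)"

fun wfd :: "dcl \<Rightarrow> bool" where
  "wfd (Nu x D) = wfd D"
| "wfd (Def b x ys D1 D2) = (ys \<noteq> [] \<and> wfd D1 \<and> wfd D2)"
| "wfd (Tm M) = wft M"

fun wfb :: "bndr \<Rightarrow> bool" where
  "wfb (BNu x) = True"
| "wfb (BDef b x ys D1) = (ys \<noteq> [] \<and> wfd D1)"

section \<open>Structural congruence (including alpha-renaming)\<close>

inductive scong :: "dcl \<Rightarrow> dcl \<Rightarrow> bool" (infix "\<equiv>\<^sub>\<pi>" 50) where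
  sc_refl: "D \<equiv>\<^sub>\<pi> D"
| sc_sym: "D \<equiv>\<^sub>\<pi> D' \<Longrightarrow> D' \<equiv>\<^sub>\<pi> D"
| sc_trans: "D \<equiv>\<^sub>\<pi> D' \<Longrightarrow> D' \<equiv>\<^sub>\<pi> D'' \<Longrightarrow> D \<equiv>\<^sub>\<pi> D''"
| sc_bind: "D \<equiv>\<^sub>\<pi> D' \<Longrightarrow> bind1 \<beta> D \<equiv>\<^sub>\<pi> bind1 \<beta> D'"
| sc_body: "D1 \<equiv>\<^sub>\<pi> D1' \<Longrightarrow> Def b x ys D1 D \<equiv>\<^sub>\<pi> Def b x ys D1' D"
| sc_alpha_nu: "c \<notin> fv D \<Longrightarrow> Nu a D \<equiv>\<^sub>\<pi> Nu c (mapd (swapn a c) D)"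
| sc_alpha_def: "c \<notin> fv D2 \<Longrightarrow> Def b a ys D1 D2 \<equiv>\<^sub>\<pi> Def b c ys D1 (mapd (swapn a c) D2)"
| sc_alpha_par: "a \<notin> fv D1 - set ys \<Longrightarrow> c \<notin> fv D1 - set ys \<Longrightarrow>
     Def b x ys D1 D2 \<equiv>\<^sub>\<pi> Def b x (map (swapn a c) ys) (mapd (swapn a c) D1) D2"
| sc_swap: "bnd \<beta>1 \<noteq> bnd \<beta>2 \<Longrightarrow>
     bnd \<beta>1 \<notin> fvb \<beta>1 \<Longrightarrow> bnd \<beta>2 \<notin> fvb \<beta>2 \<Longrightarrow>
     bnd \<beta>1 \<notin> fvb \<beta>2 \<Longrightarrow> bnd \<beta>2 \<notin> fvb \<beta>1 \<Longrightarrow>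
     bind1 \<beta>1 (bind1 \<beta>2 D) \<equiv>\<^sub>\<pi> bind1 \<beta>2 (bind1 \<beta>1 D)"
| sc_gc: "bnd \<beta> \<notin> fv D \<Longrightarrow> wfb \<beta> \<Longrightarrow> bind1 \<beta> D \<equiv>\<^sub>\<pi> D"

section \<open>Reduction\<close>

text \<open>An evaluation context E is (by the placement convention) a prefix of
  binders B followed by a term context T.  The side conditions express that
  bound names are chosen apart (Barendregt convention); reduction is closed
  under structural congruence, which includes alpha-renaming.\<close>

inductive red :: "dcl \<Rightarrow> dcl \<Rightarrow> bool" (infix "\<longrightarrow>\<^sub>\<pi>" 50) where
  red_rep: "length ys = length zs \<Longrightarrow>
     x \<notin> bnd ` set B' \<Longrightarrow>
     (fv D - set ys) \<inter> insert x (bnd ` set B') = {} \<Longrightarrow>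
     bn D \<inter> set zs = {} \<Longrightarrow>
     topbn D \<inter> tfv T = {} \<Longrightarrow>
     bind B (Def True x ys D (bind B' (Tm (tplug T (Out x zs)))))
       \<longrightarrow>\<^sub>\<pi> bind B (Def True x ys D (bind B' (ext (substd (sub ys zs) D) T)))"
| red_lin: "length ys = length zs \<Longrightarrow>
     x \<notin> bnd ` set B' \<Longrightarrow>
     (fv D - set ys) \<inter> insert x (bnd ` set B') = {} \<Longrightarrow>
     bn D \<inter> set zs = {} \<Longrightarrow>
     topbn D \<inter> tfv T = {} \<Longrightarrow>
     bind B (Def False x ys D (bind B' (Tm (tplug T (Out x zs)))))
       \<longrightarrow>\<^sub>\<pi> bind B (Nu x (bind B' (ext (substd (sub ys zs) D) T)))"
| red_cong: "P \<equiv>\<^sub>\<pi> P' \<Longrightarrow> P' \<longrightarrow>\<^sub>\<pi> Q' \<Longrightarrow> Q' \<equiv>\<^sub>\<pi> Q \<Longrightarrow> P \<longrightarrow>\<^sub>\<pi> Q"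

section \<open>Typing\<close>

inductive typt :: "(name \<rightharpoonup> ty) \<Rightarrow> trm \<Rightarrow> bool" where
  typt_out: "ys \<noteq> [] \<Longrightarrow> \<Gamma> x = Some (Ch As) \<Longrightarrow>
     list_all2 (\<lambda>y A. \<Gamma> y = Some A) ys As \<Longrightarrow> typt \<Gamma> (Out x ys)"
| typt_par: "typt \<Gamma> M1 \<Longrightarrow> typt \<Gamma> M2 \<Longrightarrow> typt \<Gamma> (Par M1 M2)"

inductive typd :: "(name \<rightharpoonup> ty) \<Rightarrow> dcl \<Rightarrow> bool" where
  typd_nu: "typd (\<Gamma>(x \<mapsto> A)) D \<Longrightarrow> typd \<Gamma> (Nu x D)"
| typd_def: "ys \<noteq> [] \<Longrightarrow> length As = length ys \<Longrightarrow>
     typd (\<Gamma>(ys [\<mapsto>] As)) D1 \<Longrightarrow> typd (\<Gamma>(x \<mapsto> Ch As)) D2 \<Longrightarrow>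
     typd \<Gamma> (Def b x ys D1 D2)"
| typd_tm: "typt \<Gamma> M \<Longrightarrow> typd \<Gamma> (Tm M)"

end

theory Submission
  imports Defs
begin

text \<open>
  Declarations are given a cost by a big-step semantics in which names denote values: a
  restricted name denotes an inert atom, a defined name the closure of its definition, and
  an output \<open>x\<langle>zs\<rangle>\<close> on a closure runs its body at the price of one unit. A reduction step
  replaces such an output by the instantiated body, so it lowers the cost by one, while
  structural congruence never raises it. Since closures capture their bodies only up to
  congruence, costs are compared through a step-indexed logical relation \<open>approx\<close> between
  values. Well-typed declarations have a cost at all, by a reducibility argument on types;
  hence an infinite reduction sequence would yield an infinite descending chain of naturals.
\<close>

section \<open>Cost semantics\<close>

datatype val = Atom | Clo "name list" dcl "name \<Rightarrow> val"

fun upds :: "(name \<Rightarrow> val) \<Rightarrow> name list \<Rightarrow> val list \<Rightarrow> name \<Rightarrow> val" where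
  "upds s (y # ys) (v # vs) = upds (s(y := v)) ys vs"
| "upds s _ _ = s"

inductive eval :: "(name \<Rightarrow> val) \<Rightarrow> dcl \<Rightarrow> nat \<Rightarrow> bool"
  and eval_trm :: "(name \<Rightarrow> val) \<Rightarrow> trm \<Rightarrow> nat \<Rightarrow> bool"
  and eval_app :: "val \<Rightarrow> val list \<Rightarrow> nat \<Rightarrow> bool" where
  eval_Nu: "eval (r(x := Atom)) D n \<Longrightarrow> eval r (Nu x D) n"
| eval_Def: "eval (r(x := Clo ys D1 r)) D2 n \<Longrightarrow> eval r (Def b x ys D1 D2) n"
| eval_Tm: "eval_trm r M n \<Longrightarrow> eval r (Tm M) n"
| eval_Out: "eval_app (r x) (map r zs) n \<Longrightarrow> eval_trm r (Out x zs) n"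
| eval_Par: "eval_trm r M m \<Longrightarrow> eval_trm r N n \<Longrightarrow> eval_trm r (Par M N) (m + n)"
| eval_app_Atom: "eval_app Atom vs 0"
| eval_app_arity: "length ys \<noteq> length vs \<Longrightarrow> eval_app (Clo ys D s) vs 0"
| eval_app_Clo: "length ys = length vs \<Longrightarrow> eval (upds s ys vs) D n \<Longrightarrow>
    eval_app (Clo ys D s) vs (Suc n)"

inductive_simps eval_Nu_iff: "eval r (Nu x D) n"
inductive_simps eval_Def_iff: "eval r (Def b x ys D1 D2) n"
inductive_cases eval_TmE: "eval r (Tm M) n"
inductive_cases eval_OutE: "eval_trm r (Out x zs) n"
inductive_cases eval_ParE: "eval_trm r (Par M N) n"
inductive_cases eval_app_CloE: "eval_app (Clo ys D s) vs n"

lemma upds_notin: "w \<notin> set ys \<Longrightarrow> upds r ys vs w = r w"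
  by (induction r ys vs rule: upds.induct) auto

lemma upds_map_upds:
  "length ys = length zs \<Longrightarrow> w \<in> set ys \<Longrightarrow>
    upds r ys (map f zs) w = f (the ((m(ys [\<mapsto>] zs)) w))"
proof (induction ys arbitrary: zs r m)
  case (Cons y ys)
  then obtain z zs' where zs: "zs = z # zs'" by (cases zs) auto
  show ?case
  proof (cases "w \<in> set ys")
    case True
    then show ?thesis using Cons zs by simp
  next
    case False
    then show ?thesis using Cons.prems zs by (simp add: upds_notin)
  qed
qed simp


section \<open>Step-indexed approximation of values\<close>

definition shape_approx :: "val \<Rightarrow> val \<Rightarrow> bool" where
  "shape_approx v v' = (case v' of Atom \<Rightarrow> v = Atom
     | Clo ys' _ _ \<Rightarrow> (case v of Atom \<Rightarrow> True | Clo ys _ _ \<Rightarrow> length ys = length ys'))"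

text \<open>At index \<open>0\<close> only the
  shape matters, which makes inert applications of \<open>v'\<close> inert for \<open>v\<close> as well.\<close>

primrec approx :: "nat \<Rightarrow> val \<Rightarrow> val \<Rightarrow> bool" where
  "approx 0 v v' = shape_approx v v'"
| "approx (Suc k) v v' = (approx k v v' \<and>
     (\<forall>vs vs' n'. list_all2 (approx k) vs vs' \<longrightarrow> eval_app v' vs' n' \<longrightarrow> n' \<le> Suc k \<longrightarrow>
        (\<exists>n\<le>n'. eval_app v vs n)))"

abbreviation approx_env :: "nat \<Rightarrow> (name \<Rightarrow> val) \<Rightarrow> (name \<Rightarrow> val) \<Rightarrow> bool" where
  "approx_env k r r' \<equiv> \<forall>a. approx k (r a) (r' a)"

lemma approx_mono: "approx k v v' \<Longrightarrow> j \<le> k \<Longrightarrow> approx j v v'"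
  by (induction k) (auto simp: le_Suc_eq)

lemma list_all2_approx_mono: "list_all2 (approx k) vs vs' \<Longrightarrow> j \<le> k \<Longrightarrow> list_all2 (approx j) vs vs'"
  by (erule list_all2_mono) (rule approx_mono)

lemma approx_Atom: "approx k Atom v"
  by (induction k) (auto simp: shape_approx_def intro: eval_app_Atom split: val.splits)

lemma approx_eval_app:
  assumes "approx k v v'" and "list_all2 (approx k) vs vs'" and "eval_app v' vs' n'" and "n' \<le> k"
  shows "\<exists>n\<le>n'. eval_app v vs n"
proof (cases n')
  case 0
  have shape: "shape_approx v v'" using approx_mono[OF assms(1), of 0] by simp
  have len: "length vs = length vs'" using assms(2) by (rule list_all2_lengthD)
  show ?thesis
  proof (cases v')
    case Atom
    then show ?thesis using shape by (auto simp: shape_approx_def intro: eval_app_Atom)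
  next
    case (Clo ys' D' s')
    then have "length ys' \<noteq> length vs'" using assms(3) 0 by (auto elim: eval_app_CloE)
    then show ?thesis using shape Clo len 0
      by (cases v) (auto simp: shape_approx_def intro!: exI[of _ 0] eval_app_Atom eval_app_arity)
  qed
next
  case (Suc j)
  have "Suc j \<le> k" using assms(4) Suc by simp
  then have "approx (Suc j) v v'" and "list_all2 (approx j) vs vs'"
    using approx_mono[OF assms(1)] list_all2_approx_mono[OF assms(2)] Suc_leD by blast+
  then show ?thesis using assms(3) Suc by (simp only: approx.simps)
qed

section \<open>Renaming\<close>

text \<open>This single relation covers alpha-renaming,
  permutations of names and capture-free substitutions.\<close>

definition rel_upd :: "(name \<Rightarrow> name \<Rightarrow> bool) \<Rightarrow> name \<Rightarrow> name \<Rightarrow> name \<Rightarrow> name \<Rightarrow> bool" where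
  "rel_upd R x x' = (\<lambda>a b. (a = x \<and> b = x') \<or> (a \<noteq> x \<and> b \<noteq> x' \<and> R a b))"

fun rel_upds :: "(name \<Rightarrow> name \<Rightarrow> bool) \<Rightarrow> name list \<Rightarrow> name list \<Rightarrow> name \<Rightarrow> name \<Rightarrow> bool" where
  "rel_upds R (y # ys) (y' # ys') = rel_upds (rel_upd R y y') ys ys'"
| "rel_upds R _ _ = R"

inductive ren_trm :: "(name \<Rightarrow> name \<Rightarrow> bool) \<Rightarrow> trm \<Rightarrow> trm \<Rightarrow> bool" where
  ren_Out: "R x x' \<Longrightarrow> list_all2 R zs zs' \<Longrightarrow> ren_trm R (Out x zs) (Out x' zs')"
| ren_Par: "ren_trm R M M' \<Longrightarrow> ren_trm R N N' \<Longrightarrow> ren_trm R (Par M N) (Par M' N')"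

inductive ren :: "(name \<Rightarrow> name \<Rightarrow> bool) \<Rightarrow> dcl \<Rightarrow> dcl \<Rightarrow> bool" where
  ren_Nu: "ren (rel_upd R x x') D D' \<Longrightarrow> ren R (Nu x D) (Nu x' D')"
| ren_Def: "length ys = length ys' \<Longrightarrow> ren (rel_upds R ys ys') D1 D1' \<Longrightarrow>
    ren (rel_upd R x x') D2 D2' \<Longrightarrow> ren R (Def b x ys D1 D2) (Def b x' ys' D1' D2')"
| ren_Tm: "ren_trm R M M' \<Longrightarrow> ren R (Tm M) (Tm M')"

lemma approx_rel_upd:
  "\<forall>a b. R a b \<longrightarrow> approx k (r a) (r' b) \<Longrightarrow> approx k v v' \<Longrightarrow>
    \<forall>a b. rel_upd R x x' a b \<longrightarrow> approx k ((r(x := v)) a) ((r'(x' := v')) b)"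
  by (auto simp: rel_upd_def)

lemma approx_rel_upds:
  "length ys = length ys' \<Longrightarrow> list_all2 (approx k) vs vs' \<Longrightarrow> length vs = length ys \<Longrightarrow>
    \<forall>a b. R a b \<longrightarrow> approx k (r a) (r' b) \<Longrightarrow>
    \<forall>a b. rel_upds R ys ys' a b \<longrightarrow> approx k (upds r ys vs a) (upds r' ys' vs' b)"
proof (induction ys arbitrary: ys' vs vs' r r' R)
  case (Cons y ys)
  obtain y' ys2 where ys': "ys' = y' # ys2" using Cons.prems(1) by (cases ys') auto
  obtain v vs2 where vs: "vs = v # vs2" using Cons.prems(3) by (cases vs) auto
  obtain v' vs2' where vs': "vs' = v' # vs2'" using Cons.prems(2) vs by (cases vs') auto
  have "\<forall>a b. rel_upd R y y' a b \<longrightarrow> approx k ((r(y := v)) a) ((r'(y' := v')) b)"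
    using approx_rel_upd[OF Cons.prems(4)] Cons.prems(2) vs vs' by auto
  then show ?case using Cons.IH[of ys2 vs2 vs2'] Cons.prems ys' vs vs' by simp
qed simp

lemma eval_trm_ren:
  "ren_trm R M M' \<Longrightarrow> eval_trm r' M' n' \<Longrightarrow> \<forall>a b. R a b \<longrightarrow> approx n' (r a) (r' b) \<Longrightarrow>
    \<exists>n\<le>n'. eval_trm r M n"
proof (induction arbitrary: n' rule: ren_trm.induct)
  case (ren_Out R x x' zs zs')
  from ren_Out.prems(1) have app: "eval_app (r' x') (map r' zs') n'" by (auto elim: eval_OutE)
  have "list_all2 (approx n') (map r zs) (map r' zs')"
    using ren_Out.hyps(2) ren_Out.prems(2)
    by (auto simp: list_all2_map1 list_all2_map2 elim!: list_all2_mono)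
  then show ?case using approx_eval_app[OF _ _ app] ren_Out by (blast intro: eval_Out)
next
  case (ren_Par R M M' N N')
  from ren_Par.prems(1) obtain a b where ab: "n' = a + b" "eval_trm r' M' a" "eval_trm r' N' b"
    by (auto elim: eval_ParE)
  obtain a1 where "a1 \<le> a" "eval_trm r M a1"
    using ren_Par.IH(1)[OF ab(2)] ren_Par.prems(2) ab(1) by (meson le_add1 approx_mono)
  moreover obtain b1 where "b1 \<le> b" "eval_trm r N b1"
    using ren_Par.IH(2)[OF ab(3)] ren_Par.prems(2) ab(1) by (meson le_add2 approx_mono)
  ultimately show ?case using ab(1) by (auto intro!: eval_Par exI[of _ "a1 + b1"])
qed

lemma approx_Clo_bodies:
  assumes len: "length ys = length ys'"
    and bodies: "\<And>r r' m'. eval r' D' m' \<Longrightarrow>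
      \<forall>a b. rel_upds R ys ys' a b \<longrightarrow> approx m' (r a) (r' b) \<Longrightarrow> \<exists>m\<le>m'. eval r D m"
  shows "\<forall>a b. R a b \<longrightarrow> approx k (s a) (s' b) \<Longrightarrow> approx k (Clo ys D s) (Clo ys' D' s')"
proof (induction k)
  case 0
  then show ?case using len by (simp add: shape_approx_def)
next
  case (Suc k)
  then have "approx k (Clo ys D s) (Clo ys' D' s')" by (meson approx_mono le_SucI order_refl)
  moreover have "\<exists>n\<le>n'. eval_app (Clo ys D s) vs n"
    if vs: "list_all2 (approx k) vs vs'" and app: "eval_app (Clo ys' D' s') vs' n'"
      and "n' \<le> Suc k" for vs vs' n'
  proof (cases "length ys' = length vs'")
    case False
    then show ?thesis using list_all2_lengthD[OF vs] len
      by (auto intro!: eval_app_arity exI[of _ 0])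
  next
    case True
    with app obtain m' where "n' = Suc m'" and body: "eval (upds s' ys' vs') D' m'"
      by (auto elim: eval_app_CloE)
    then have "m' \<le> k" using \<open>n' \<le> Suc k\<close> by simp
    then have "\<forall>a b. R a b \<longrightarrow> approx m' (s a) (s' b)" and "list_all2 (approx m') vs vs'"
      using Suc.prems list_all2_approx_mono[OF vs] by (meson approx_mono le_SucI)+
    then have "\<forall>a b. rel_upds R ys ys' a b \<longrightarrow> approx m' (upds s ys vs a) (upds s' ys' vs' b)"
      using approx_rel_upds len True list_all2_lengthD[OF vs] by simp
    then obtain m where "m \<le> m'" and "eval (upds s ys vs) D m" using bodies[OF body] by blast
    then show ?thesis
      using \<open>n' = Suc m'\<close> True list_all2_lengthD[OF vs] len by (auto intro!: eval_app_Clo)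
  qed
  ultimately show ?case by simp
qed

lemma eval_ren:
  "ren R D D' \<Longrightarrow> eval r' D' n' \<Longrightarrow> \<forall>a b. R a b \<longrightarrow> approx n' (r a) (r' b) \<Longrightarrow>
    \<exists>n\<le>n'. eval r D n"
proof (induction arbitrary: r r' n' rule: ren.induct)
  case (ren_Nu R x x' D D')
  from ren_Nu.prems(1) have "eval (r'(x' := Atom)) D' n'" by (simp add: eval_Nu_iff)
  then show ?case
    using ren_Nu.IH approx_rel_upd[OF ren_Nu.prems(2) approx_Atom] by (blast intro: eval_Nu)
next
  case (ren_Def ys ys' R D1 D1' x x' D2 D2' b)
  from ren_Def.prems(1) have body: "eval (r'(x' := Clo ys' D1' r')) D2' n'"
    by (simp add: eval_Def_iff)
  have "approx n' (Clo ys D1 r) (Clo ys' D1' r')"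
    by (rule approx_Clo_bodies[OF ren_Def.hyps(1) ren_Def.IH(1) ren_Def.prems(2)])
  then show ?case
    using ren_Def.IH(2)[OF body] approx_rel_upd[OF ren_Def.prems(2)] by (blast intro: eval_Def)
next
  case (ren_Tm R M M')
  then show ?case using eval_trm_ren by (blast elim: eval_TmE intro: eval_Tm)
qed

subsection \<open>Closure properties of renaming\<close>

lemma rel_upd_mono: "(\<And>a b. R a b \<Longrightarrow> R' a b) \<Longrightarrow> rel_upd R x x' a b \<Longrightarrow> rel_upd R' x x' a b"
  by (auto simp: rel_upd_def)

lemma rel_upds_mono: "(\<And>a b. R a b \<Longrightarrow> R' a b) \<Longrightarrow> rel_upds R ys ys' a b \<Longrightarrow> rel_upds R' ys ys' a b"
proof (induction R ys ys' arbitrary: R' rule: rel_upds.induct)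
  case (1 R y ys y' ys')
  then show ?case using rel_upd_mono[of R R' y y'] by simp
qed simp_all

lemma ren_trm_mono: "ren_trm R M M' \<Longrightarrow> (\<And>a b. R a b \<Longrightarrow> R' a b) \<Longrightarrow> ren_trm R' M M'"
  by (induction rule: ren_trm.induct) (auto intro!: ren_trm.intros elim: list_all2_mono)

lemma ren_mono: "ren R D D' \<Longrightarrow> (\<And>a b. R a b \<Longrightarrow> R' a b) \<Longrightarrow> ren R' D D'"
proof (induction arbitrary: R' rule: ren.induct)
  case (ren_Nu R x x' D D')
  then show ?case by (metis ren.ren_Nu rel_upd_mono)
next
  case (ren_Def ys ys' R D1 D1' x x' D2 D2' b)
  then show ?case by (metis ren.ren_Def rel_upd_mono rel_upds_mono)
next
  case (ren_Tm R M M')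
  then show ?case by (metis ren.ren_Tm ren_trm_mono)
qed

lemma rel_upd_conversep: "rel_upd R\<inverse>\<inverse> x' x = (rel_upd R x x')\<inverse>\<inverse>"
  by (auto simp: rel_upd_def fun_eq_iff)

lemma rel_upds_conversep: "rel_upds R\<inverse>\<inverse> ys' ys = (rel_upds R ys ys')\<inverse>\<inverse>"
proof (induction ys arbitrary: ys' R)
  case (Cons y ys)
  then show ?case by (cases ys') (simp_all only: rel_upds.simps rel_upd_conversep Cons.IH)
qed (cases ys'; simp only: rel_upds.simps)

lemma ren_trm_conversep: "ren_trm R M M' \<Longrightarrow> ren_trm R\<inverse>\<inverse> M' M"
  by (induction rule: ren_trm.induct) (auto intro!: ren_trm.intros simp: list_all2_conv_all_nth)

lemma ren_conversep: "ren R D D' \<Longrightarrow> ren R\<inverse>\<inverse> D' D"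
proof (induction rule: ren.induct)
  case (ren_Nu R x x' D D')
  show ?case by (rule ren.ren_Nu) (simp only: rel_upd_conversep ren_Nu.IH)
next
  case (ren_Def ys ys' R D1 D1' x x' D2 D2' b)
  show ?case
    by (rule ren.ren_Def)
      (simp_all only: rel_upd_conversep rel_upds_conversep ren_Def.IH ren_Def.hyps(1))
next
  case (ren_Tm R M M')
  then show ?case by (simp only: ren.ren_Tm ren_trm_conversep)
qed

lemma rel_upd_graph: "inj p \<Longrightarrow> rel_upd (\<lambda>a b. b = p a) x (p x) = (\<lambda>a b. b = p a)"
  by (auto simp: rel_upd_def fun_eq_iff inj_eq)

lemma rel_upds_graph: "inj p \<Longrightarrow> rel_upds (\<lambda>a b. b = p a) ys (map p ys) = (\<lambda>a b. b = p a)"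
  by (induction ys) (auto simp: rel_upd_graph)

lemma ren_trm_mapt: "ren_trm (\<lambda>a b. b = p a) M (mapt p M)"
  by (induction M) (auto intro!: ren_trm.intros simp: list_all2_conv_all_nth)

lemma ren_mapd: "inj p \<Longrightarrow> ren (\<lambda>a b. b = p a) D (mapd p D)"
  by (induction D) (auto intro!: ren.intros ren_trm_mapt simp: rel_upd_graph rel_upds_graph)

lemma rel_upd_eq: "rel_upd (=) x x = (=)"
  by (auto simp: rel_upd_def fun_eq_iff)

lemma rel_upds_eq: "rel_upds (=) ys ys = (=)"
  by (induction ys) (auto simp: rel_upd_eq)

lemma ren_trm_refl: "ren_trm (=) M M"
  by (induction M) (auto intro!: ren_trm.intros simp: list.rel_eq)

lemma ren_refl: "ren (=) D D"
  by (induction D) (auto intro!: ren.intros ren_trm_refl simp: rel_upd_eq rel_upds_eq)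

lemma rel_upds_keep: "R a b \<Longrightarrow> a \<notin> set ys \<Longrightarrow> b \<notin> set ys' \<Longrightarrow> rel_upds R ys ys' a b"
  by (induction R ys ys' rule: rel_upds.induct) (auto simp: rel_upd_def)

lemma rel_upds_bound: "a \<in> set ys \<Longrightarrow> inj p \<Longrightarrow> rel_upds R ys (map p ys) a (p a)"
proof (induction ys arbitrary: R)
  case (Cons y ys)
  show ?case
  proof (cases "a \<in> set ys")
    case False
    then have "a = y" using Cons.prems(1) by simp
    have "rel_upds (rel_upd R y (p y)) ys (map p ys) y (p y)"
      by (rule rel_upds_keep)
        (use False \<open>a = y\<close> Cons.prems(2) in \<open>auto simp: rel_upd_def inj_image_mem_iff\<close>)
    then show ?thesis using \<open>a = y\<close> by simp
  qed (use Cons in simp)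
qed simp

lemma rel_upds_restrict:
  "length ys = length ys' \<Longrightarrow> rel_upds R ys ys' a b \<Longrightarrow> (a \<notin> set ys \<longrightarrow> a \<in> A) \<Longrightarrow>
    rel_upds (\<lambda>a b. R a b \<and> a \<in> A) ys ys' a b"
proof (induction ys arbitrary: ys' R A)
  case (Cons y ys)
  then obtain y' ys2 where ys': "ys' = y' # ys2" by (cases ys') auto
  have "rel_upds (\<lambda>a b. rel_upd R y y' a b \<and> a \<in> insert y A) ys ys2 a b"
    using Cons.IH[of ys2 "rel_upd R y y'" "insert y A"] Cons.prems ys' by auto
  then have "rel_upds (rel_upd (\<lambda>a b. R a b \<and> a \<in> A) y y') ys ys2 a b"
    by (rule rel_upds_mono[rotated]) (auto simp: rel_upd_def)
  then show ?case using ys' by simp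
qed simp

lemma ren_trm_restrict_fvt: "ren_trm R M M' \<Longrightarrow> ren_trm (\<lambda>a b. R a b \<and> a \<in> fvt M) M M'"
proof (induction rule: ren_trm.induct)
  case (ren_Out R x x' zs zs')
  then show ?case by (auto intro!: ren_trm.intros simp: list_all2_conv_all_nth)
next
  case (ren_Par R M M' N N')
  show ?case
    by (rule ren_trm.ren_Par;
      rule ren_trm_mono[OF ren_Par.IH(1)] ren_trm_mono[OF ren_Par.IH(2)]) auto
qed

lemma ren_restrict_fv: "ren R D D' \<Longrightarrow> ren (\<lambda>a b. R a b \<and> a \<in> fv D) D D'"
proof (induction rule: ren.induct)
  case (ren_Nu R x x' D D')
  show ?case
    by (rule ren.ren_Nu, rule ren_mono[OF ren_Nu.IH]) (auto simp: rel_upd_def)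
next
  case (ren_Def ys ys' R D1 D1' x x' D2 D2' b)
  let ?A = "fv (Def b x ys D1 D2)"
  have "ren (rel_upds (\<lambda>u w. R u w \<and> u \<in> ?A) ys ys') D1 D1'"
    by (rule ren_mono[OF ren_Def.IH(1)], rule rel_upds_restrict[OF ren_Def.hyps(1)]) auto
  moreover have "ren (rel_upd (\<lambda>u w. R u w \<and> u \<in> ?A) x x') D2 D2'"
    by (rule ren_mono[OF ren_Def.IH(2)]) (auto simp: rel_upd_def)
  ultimately show ?case by (rule ren.ren_Def[OF ren_Def.hyps(1)])
next
  case (ren_Tm R M M')
  then show ?case using ren_trm_restrict_fvt by (auto intro: ren.ren_Tm)
qed

lemma ren_substd: "\<forall>a. s a \<noteq> a \<longrightarrow> s a \<notin> bn D \<Longrightarrow> ren (\<lambda>a b. b = s a) D (substd s D)"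
proof (induction D arbitrary: s)
  case (Nu x D)
  have "ren (\<lambda>a b. b = (s(x := x)) a) D (substd (s(x := x)) D)"
    by (rule Nu.IH) (use Nu.prems in auto)
  moreover have "a \<noteq> x \<Longrightarrow> s a \<noteq> x" for a
    using Nu.prems by (metis bn.simps(1) insertI1)
  ultimately have "ren (rel_upd (\<lambda>a b. b = s a) x x) D (substd (s(x := x)) D)"
    by (elim ren_mono) (auto simp: rel_upd_def)
  then show ?case by (auto intro: ren.ren_Nu)
next
  case (Def b x ys D1 D2)
  let ?s1 = "\<lambda>n. if n \<in> set ys then n else s n"
  have "ren (\<lambda>a b. b = ?s1 a) D1 (substd ?s1 D1)"
    by (rule Def.IH(1)) (use Def.prems in auto)
  moreover have "rel_upds (\<lambda>a b. b = s a) ys ys a (?s1 a)" for a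
  proof (cases "a \<in> set ys")
    case True
    then show ?thesis using rel_upds_bound[OF True inj_on_id] by simp
  next
    case False
    then have "s a \<notin> set ys" using Def.prems by (cases "s a = a") auto
    then show ?thesis using False by (simp add: rel_upds_keep)
  qed
  ultimately have body: "ren (rel_upds (\<lambda>a b. b = s a) ys ys) D1 (substd ?s1 D1)"
    by (elim ren_mono) simp
  have "ren (\<lambda>a b. b = (s(x := x)) a) D2 (substd (s(x := x)) D2)"
    by (rule Def.IH(2)) (use Def.prems in auto)
  moreover have "a \<noteq> x \<Longrightarrow> s a \<noteq> x" for a
    using Def.prems by (metis bn.simps(2) insertI1)
  ultimately have "ren (rel_upd (\<lambda>a b. b = s a) x x) D2 (substd (s(x := x)) D2)"
    by (elim ren_mono) (auto simp: rel_upd_def)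
  with body show ?case using ren.ren_Def by simp
next
  case (Tm M)
  then show ?case by (simp add: ren_Tm ren_trm_mapt)
qed

lemma approx_Clo_ren:
  "ren (rel_upds R ys ys') D D' \<Longrightarrow> length ys = length ys' \<Longrightarrow>
    \<forall>a b. R a b \<longrightarrow> approx k (s a) (s' b) \<Longrightarrow> approx k (Clo ys D s) (Clo ys' D' s')"
  by (rule approx_Clo_bodies) (auto elim: eval_ren)

lemma approx_Clo_env: "approx_env k s s' \<Longrightarrow> approx k (Clo ys D s) (Clo ys D s')"
  by (rule approx_Clo_ren[where R = "(=)"]) (simp_all add: rel_upds_eq ren_refl)

lemma approx_refl: "approx k v v"
  by (induction v arbitrary: k) (auto intro: approx_Atom approx_Clo_env)

lemma approx_Clo_fv:
  assumes "\<forall>a\<in>fv D - set ys. approx k (s a) (s' a)"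
  shows "approx k (Clo ys D s) (Clo ys D s')"
proof (rule approx_Clo_ren[where R = "\<lambda>a b. a = b \<and> a \<in> fv D - set ys"])
  show "ren (rel_upds (\<lambda>a b. a = b \<and> a \<in> fv D - set ys) ys ys) D D"
    by (rule ren_mono[OF ren_restrict_fv[OF ren_refl]])
      (use rel_upds_bound[where p = id] in \<open>auto intro: rel_upds_keep\<close>)
qed (use assms in simp_all)

lemma eval_approx_fv:
  "eval r' D n' \<Longrightarrow> \<forall>a\<in>fv D. approx n' (r a) (r' a) \<Longrightarrow> \<exists>n\<le>n'. eval r D n"
  by (erule eval_ren[OF ren_restrict_fv[OF ren_refl]]) simp

lemma eval_approx_env: "eval r' D n' \<Longrightarrow> approx_env n' r r' \<Longrightarrow> \<exists>n\<le>n'. eval r D n"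
  by (erule eval_ren[OF ren_refl]) simp


section \<open>Structural congruence does not increase cost\<close>

definition cost_le :: "dcl \<Rightarrow> dcl \<Rightarrow> bool" where
  "cost_le D D' = (\<forall>r r' n'. eval r' D' n' \<longrightarrow> approx_env n' r r' \<longrightarrow> (\<exists>n\<le>n'. eval r D n))"

lemma cost_leI:
  "(\<And>r r' n'. eval r' D' n' \<Longrightarrow> approx_env n' r r' \<Longrightarrow> \<exists>n\<le>n'. eval r D n) \<Longrightarrow> cost_le D D'"
  by (simp add: cost_le_def)

lemma cost_leD: "cost_le D D' \<Longrightarrow> eval r' D' n' \<Longrightarrow> approx_env n' r r' \<Longrightarrow> \<exists>n\<le>n'. eval r D n"
  by (simp add: cost_le_def)

lemma cost_le_refl: "cost_le D D"
  by (rule cost_leI) (rule eval_approx_env)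

lemma cost_le_trans: "cost_le D1 D2 \<Longrightarrow> cost_le D2 D3 \<Longrightarrow> cost_le D1 D3"
proof (rule cost_leI)
  fix r r' n'
  assume "cost_le D1 D2" "cost_le D2 D3" "eval r' D3 n'" "approx_env n' r r'"
  then obtain n2 where "n2 \<le> n'" "eval r' D2 n2" using cost_leD approx_refl by blast
  then show "\<exists>n\<le>n'. eval r D1 n"
    using cost_leD[OF \<open>cost_le D1 D2\<close>] \<open>approx_env n' r r'\<close> approx_mono le_trans by meson
qed

fun bval :: "bndr \<Rightarrow> (name \<Rightarrow> val) \<Rightarrow> val" where
  "bval (BNu x) r = Atom"
| "bval (BDef b x ys D1) r = Clo ys D1 r"

definition benv :: "bndr \<Rightarrow> (name \<Rightarrow> val) \<Rightarrow> name \<Rightarrow> val" where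
  "benv \<beta> r = r(bnd \<beta> := bval \<beta> r)"

lemma eval_bind1: "eval r (bind1 \<beta> D) n \<longleftrightarrow> eval (benv \<beta> r) D n"
  by (cases \<beta>) (simp_all add: benv_def eval_Nu_iff eval_Def_iff)

lemma eval_bind: "eval r (bind (\<beta> # B) D) n \<longleftrightarrow> eval (benv \<beta> r) (bind B D) n"
  by (simp add: bind_def eval_bind1)

lemma approx_bval: "\<forall>a\<in>fvb \<beta>. approx k (r a) (r' a) \<Longrightarrow> approx k (bval \<beta> r) (bval \<beta> r')"
  by (cases \<beta>) (auto intro: approx_Atom approx_Clo_fv)

lemma approx_benv: "approx_env k r r' \<Longrightarrow> approx_env k (benv \<beta> r) (benv \<beta> r')"
  using approx_bval[of \<beta> k r r'] by (auto simp: benv_def)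

lemma cost_le_bind1: "cost_le D D' \<Longrightarrow> cost_le (bind1 \<beta> D) (bind1 \<beta> D')"
  unfolding cost_le_def eval_bind1 using approx_benv by blast

lemma cost_le_Def_params:
  assumes "\<And>k r r'. approx_env k r r' \<Longrightarrow> approx k (Clo ys D1 r) (Clo ys' D1' r')"
  shows "cost_le (Def b x ys D1 D2) (Def b x ys' D1' D2)"
proof (rule cost_leI)
  fix r r' n'
  assume "eval r' (Def b x ys' D1' D2) n'" and env: "approx_env n' r r'"
  then have "eval (r'(x := Clo ys' D1' r')) D2 n'" by (simp add: eval_Def_iff)
  moreover have "approx_env n' (r(x := Clo ys D1 r)) (r'(x := Clo ys' D1' r'))"
    using env assms[OF env] by simp
  ultimately show "\<exists>n\<le>n'. eval r (Def b x ys D1 D2) n"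
    unfolding eval_Def_iff by (rule eval_approx_env)
qed

lemma cost_le_Def_body: "cost_le D1 D1' \<Longrightarrow> cost_le (Def b x ys D1 D) (Def b x ys D1' D)"
  by (rule cost_le_Def_params, rule approx_Clo_bodies[where R = "(=)"])
    (auto simp: rel_upds_eq dest: cost_leD)

lemma swapn_swapn [simp]: "swapn a c (swapn a c n) = n"
  by (simp add: swapn_def)

lemma inj_swapn: "inj (swapn a c)"
  by (metis injI swapn_swapn)

lemma ren_mapd_swapn: "ren (\<lambda>u w. w = swapn a c u \<and> u \<in> fv D) D (mapd (swapn a c) D)"
  using ren_restrict_fv[OF ren_mapd[OF inj_swapn]] by simp

lemma eval_mapd_swapn:
  assumes "c \<notin> fv D" and "approx_env n r r'" and "approx n v v'"
  shows "eval (r'(c := v')) (mapd (swapn a c) D) n \<Longrightarrow> \<exists>m\<le>n. eval (r(a := v)) D m"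
    and "eval (r'(a := v')) D n \<Longrightarrow> \<exists>m\<le>n. eval (r(c := v)) (mapd (swapn a c) D) m"
proof -
  show "eval (r'(c := v')) (mapd (swapn a c) D) n \<Longrightarrow> \<exists>m\<le>n. eval (r(a := v)) D m"
    by (erule eval_ren[OF ren_mapd_swapn]) (use assms in \<open>auto simp: swapn_def\<close>)
  show "eval (r'(a := v')) D n \<Longrightarrow> \<exists>m\<le>n. eval (r(c := v)) (mapd (swapn a c) D) m"
    by (erule eval_ren[OF ren_conversep[OF ren_mapd_swapn]]) (use assms in \<open>auto simp: swapn_def\<close>)
qed

lemma cost_le_alpha_Nu:
  assumes "c \<notin> fv D"
  shows "cost_le (Nu a D) (Nu c (mapd (swapn a c) D))"
    and "cost_le (Nu c (mapd (swapn a c) D)) (Nu a D)"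
  using eval_mapd_swapn[OF assms _ approx_Atom] by (auto intro!: cost_leI simp: eval_Nu_iff)

lemma cost_le_alpha_Def:
  assumes "c \<notin> fv D2"
  shows "cost_le (Def b a ys D1 D2) (Def b c ys D1 (mapd (swapn a c) D2))"
    and "cost_le (Def b c ys D1 (mapd (swapn a c) D2)) (Def b a ys D1 D2)"
  using eval_mapd_swapn[OF assms _ approx_Clo_env] by (auto intro!: cost_leI simp: eval_Def_iff)

lemma ren_alpha_params:
  assumes "a \<notin> fv D1 - set ys" and "c \<notin> fv D1 - set ys"
  shows "ren (rel_upds (=) ys (map (swapn a c) ys)) D1 (mapd (swapn a c) D1)"
proof (rule ren_mono[OF ren_mapd_swapn])
  fix u w assume uw: "w = swapn a c u \<and> u \<in> fv D1"
  show "rel_upds (=) ys (map (swapn a c) ys) u w"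
  proof (cases "u \<in> set ys")
    case True
    then show ?thesis using uw rel_upds_bound[OF True inj_swapn] by simp
  next
    case False
    then have "swapn a c u = u" using assms uw by (auto simp: swapn_def)
    moreover from this have "u \<notin> set (map (swapn a c) ys)"
      using False by (metis imageE set_map swapn_swapn)
    ultimately show ?thesis using uw False by (intro rel_upds_keep) auto
  qed
qed

lemma cost_le_alpha_params:
  assumes "a \<notin> fv D1 - set ys" and "c \<notin> fv D1 - set ys"
  shows "cost_le (Def b x ys D1 D2) (Def b x (map (swapn a c) ys) (mapd (swapn a c) D1) D2)"
    and "cost_le (Def b x (map (swapn a c) ys) (mapd (swapn a c) D1) D2) (Def b x ys D1 D2)"
proof -
  have conv: "ren (rel_upds (=) (map (swapn a c) ys) ys) (mapd (swapn a c) D1) D1"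
    using ren_conversep[OF ren_alpha_params[OF assms]]
      rel_upds_conversep[of "(=)" "map (swapn a c) ys" ys] by simp
  show "cost_le (Def b x ys D1 D2) (Def b x (map (swapn a c) ys) (mapd (swapn a c) D1) D2)"
    by (rule cost_le_Def_params, rule approx_Clo_ren[OF ren_alpha_params[OF assms]]) auto
  show "cost_le (Def b x (map (swapn a c) ys) (mapd (swapn a c) D1) D2) (Def b x ys D1 D2)"
    by (rule cost_le_Def_params, rule approx_Clo_ren[OF conv]) auto
qed

lemma cost_le_swap:
  assumes "bnd \<beta>1 \<noteq> bnd \<beta>2" and "bnd \<beta>1 \<notin> fvb \<beta>2" and "bnd \<beta>2 \<notin> fvb \<beta>1"
  shows "cost_le (bind1 \<beta>1 (bind1 \<beta>2 D)) (bind1 \<beta>2 (bind1 \<beta>1 D))"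
proof (rule cost_leI)
  fix r r' n'
  assume "eval r' (bind1 \<beta>2 (bind1 \<beta>1 D)) n'" and env: "approx_env n' r r'"
  then have "eval (benv \<beta>1 (benv \<beta>2 r')) D n'" by (simp add: eval_bind1)
  moreover have "approx n' (bval \<beta>1 r) (bval \<beta>1 (benv \<beta>2 r'))"
    and "approx n' (bval \<beta>2 (benv \<beta>1 r)) (bval \<beta>2 r')"
    by (rule approx_bval; use assms env in \<open>auto simp: benv_def\<close>)+
  then have "approx_env n' (benv \<beta>2 (benv \<beta>1 r)) (benv \<beta>1 (benv \<beta>2 r'))"
    using env assms(1) by (auto simp: benv_def)
  ultimately show "\<exists>n\<le>n'. eval r (bind1 \<beta>1 (bind1 \<beta>2 D)) n"
    by (auto simp: eval_bind1 dest: eval_approx_env)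
qed

lemma cost_le_gc:
  assumes "bnd \<beta> \<notin> fv D"
  shows "cost_le (bind1 \<beta> D) D" and "cost_le D (bind1 \<beta> D)"
proof (rule_tac [!] cost_leI)
  fix r r' n'
  assume "eval r' D n'" and "approx_env n' r r'"
  moreover from this have "\<forall>a\<in>fv D. approx n' (benv \<beta> r a) (r' a)"
    using assms by (auto simp: benv_def)
  ultimately show "\<exists>n\<le>n'. eval r (bind1 \<beta> D) n"
    unfolding eval_bind1 using eval_approx_fv by blast
next
  fix r r' n'
  assume "eval r' (bind1 \<beta> D) n'" and "approx_env n' r r'"
  moreover from this have "\<forall>a\<in>fv D. approx n' (r a) (benv \<beta> r' a)"
    using assms by (auto simp: benv_def)
  ultimately show "\<exists>n\<le>n'. eval r D n"
    unfolding eval_bind1 using eval_approx_fv by blast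
qed

lemma scong_cost_le: "D \<equiv>\<^sub>\<pi> D' \<Longrightarrow> cost_le D D' \<and> cost_le D' D"
proof (induction rule: scong.induct)
  case (sc_trans D D' D'')
  then show ?case using cost_le_trans by blast
qed (auto intro: cost_le_refl cost_le_bind1 cost_le_Def_body cost_le_alpha_Nu cost_le_alpha_Def
    cost_le_alpha_params cost_le_swap cost_le_gc)


section \<open>Reduction lowers the cost\<close>

inductive eval_ctx :: "(name \<Rightarrow> val) \<Rightarrow> tctx \<Rightarrow> nat \<Rightarrow> bool" where
  "eval_ctx r THole 0"
| "eval_ctx r T m \<Longrightarrow> eval_trm r N n \<Longrightarrow> eval_ctx r (TParL T N) (m + n)"
| "eval_trm r N n \<Longrightarrow> eval_ctx r T m \<Longrightarrow> eval_ctx r (TParR N T) (n + m)"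

lemma eval_tplugE:
  "eval_trm r (tplug T M) n \<Longrightarrow> \<exists>a b. eval_trm r M a \<and> eval_ctx r T b \<and> n = a + b"
proof (induction T arbitrary: n)
  case THole
  then show ?case using eval_ctx.intros(1)[of r] by force
next
  case (TParL T N)
  then show ?case by (fastforce elim: eval_ParE intro: eval_ctx.intros)
next
  case (TParR N T)
  then show ?case by (fastforce elim: eval_ParE intro: eval_ctx.intros)
qed

lemma eval_tplug: "eval_ctx r T b \<Longrightarrow> eval_trm r M a \<Longrightarrow> eval_trm r (tplug T M) (a + b)"
proof (induction arbitrary: a rule: eval_ctx.induct)
  case (2 r T m N n)
  then show ?case using eval_Par[OF 2(3)[OF 2(4)] 2(2)] by (simp add: add.assoc)
next
  case (3 r N n T m)
  then show ?case using eval_Par[OF 3(1) 3(3)[OF 3(4)]] by (simp add: ac_simps)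
qed simp

lemma eval_trm_cong: "eval_trm r M n \<Longrightarrow> \<forall>a\<in>fvt M. r' a = r a \<Longrightarrow> eval_trm r' M n"
proof (induction M arbitrary: n)
  case (Out x zs)
  from Out.prems(1) have "eval_app (r x) (map r zs) n" by (auto elim: eval_OutE)
  moreover have "r' x = r x" and "map r' zs = map r zs" using Out.prems(2) by auto
  ultimately show ?case by (metis eval_Out)
qed (auto elim!: eval_ParE intro!: eval_Par)

lemma eval_ctx_cong: "eval_ctx r T b \<Longrightarrow> \<forall>a\<in>tfv T. r' a = r a \<Longrightarrow> eval_ctx r' T b"
  by (induction rule: eval_ctx.induct) (auto intro: eval_ctx.intros eval_trm_cong)

lemma eval_ext: "eval r D a \<Longrightarrow> eval_ctx r T b \<Longrightarrow> topbn D \<inter> tfv T = {} \<Longrightarrow> eval r (ext D T) (a + b)"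
proof (induction D arbitrary: r a)
  case (Nu x D)
  have "eval_ctx (r(x := Atom)) T b"
    by (rule eval_ctx_cong[OF Nu.prems(2)]) (use Nu.prems(3) in auto)
  with Nu show ?case by (simp add: eval_Nu_iff)
next
  case (Def b' x ys D1 D2)
  have "eval_ctx (r(x := Clo ys D1 r)) T b"
    by (rule eval_ctx_cong[OF Def.prems(2)]) (use Def.prems(3) in auto)
  with Def show ?case by (simp add: eval_Def_iff)
next
  case (Tm M)
  then show ?case by (auto elim!: eval_TmE intro!: eval_Tm eval_tplug)
qed

lemma topbn_substd: "topbn (substd s D) = topbn D"
  by (induction D arbitrary: s) auto

lemma sub_notin: "w \<notin> set ys \<Longrightarrow> sub ys zs w = w"
  by (simp add: sub_def)

lemma sub_in_zs: "sub ys zs w \<noteq> w \<Longrightarrow> sub ys zs w \<in> set zs"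
  by (auto simp: sub_def map_upds_def split: option.splits
    dest!: map_of_SomeD intro: set_zip_rightD)

lemma upds_map_sub:
  assumes "length ys = length zs" and "w \<in> set ys"
  shows "upds s ys (map f zs) w = f (sub ys zs w)"
proof -
  have "w \<in> dom (Map.empty(ys [\<mapsto>] zs))" using assms by simp
  then obtain z where "(Map.empty(ys [\<mapsto>] zs)) w = Some z" by blast
  then show ?thesis using upds_map_upds[OF assms, of s f Map.empty] by (simp add: sub_def)
qed

lemma eval_substd_sub:
  assumes "eval (upds s ys (map r zs)) D m" and "length ys = length zs"
    and "\<forall>a\<in>fv D - set ys. r a = s a" and "bn D \<inter> set zs = {}"
  shows "\<exists>m'\<le>m. eval r (substd (sub ys zs) D) m'"
proof -
  have "\<forall>a. sub ys zs a \<noteq> a \<longrightarrow> sub ys zs a \<notin> bn D" using sub_in_zs assms(4) by blast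
  then have "ren (\<lambda>u w. u = sub ys zs w \<and> w \<in> fv D) (substd (sub ys zs) D) D"
    by (rule ren_mono[OF ren_conversep[OF ren_restrict_fv[OF ren_substd]]]) auto
  moreover have "r (sub ys zs w) = upds s ys (map r zs) w" if "w \<in> fv D" for w
    using that assms(2,3) by (cases "w \<in> set ys") (auto simp: upds_map_sub sub_notin upds_notin)
  ultimately show ?thesis using assms(1) by (auto intro: approx_refl elim!: eval_ren)
qed

lemma eval_call:
  assumes "r x = Clo ys D s" and "length ys = length zs"
    and "x \<notin> bnd ` set B" and "(fv D - set ys) \<inter> bnd ` set B = {}"
    and "\<forall>a\<in>fv D - set ys. r a = s a"
    and "bn D \<inter> set zs = {}" and "topbn D \<inter> tfv T = {}"
    and "eval r (bind B (Tm (tplug T (Out x zs)))) n"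
  shows "\<exists>m<n. eval r (bind B (ext (substd (sub ys zs) D) T)) m"
  using assms(1,3,4,5,8)
proof (induction B arbitrary: r n)
  case Nil
  then have "eval_trm r (tplug T (Out x zs)) n" by (auto simp: bind_def elim: eval_TmE)
  then obtain a b where ab: "eval_trm r (Out x zs) a" "eval_ctx r T b" "n = a + b"
    using eval_tplugE by blast
  then obtain m where "a = Suc m" "eval (upds s ys (map r zs)) D m"
    using Nil.prems(1) assms(2) by (auto elim!: eval_OutE eval_app_CloE)
  then obtain m' where "m' \<le> m" "eval r (substd (sub ys zs) D) m'"
    using eval_substd_sub assms(2,6) Nil.prems(4) by blast
  then have "eval r (ext (substd (sub ys zs) D) T) (m' + b)"
    using eval_ext ab(2) assms(7) by (simp add: topbn_substd)
  then show ?case using \<open>m' \<le> m\<close> \<open>a = Suc m\<close> ab(3)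
    by (auto simp: bind_def intro!: exI[of _ "m' + b"])
next
  case (Cons \<beta> B)
  have "benv \<beta> r x = Clo ys D s" using Cons.prems(1,2) by (simp add: benv_def)
  moreover have "\<forall>a\<in>fv D - set ys. benv \<beta> r a = s a" using Cons.prems(3,4) by (auto simp: benv_def)
  moreover have "eval (benv \<beta> r) (bind B (Tm (tplug T (Out x zs)))) n"
    using Cons.prems(5) by (simp add: eval_bind)
  ultimately have "\<exists>m<n. eval (benv \<beta> r) (bind B (ext (substd (sub ys zs) D) T)) m"
    using Cons.IH[of "benv \<beta> r" n] Cons.prems(2,3) by auto
  then show ?case by (simp add: eval_bind)
qed

lemma eval_bind_decrease:
  "(\<And>r n. eval r X n \<Longrightarrow> \<exists>m<n. eval r Y m) \<Longrightarrow> eval r (bind B X) n \<Longrightarrow> \<exists>m<n. eval r (bind B Y) m"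
  by (induction B arbitrary: r n) (auto simp: bind_def eval_bind1)

lemma red_eval_decrease: "P \<longrightarrow>\<^sub>\<pi> Q \<Longrightarrow> eval r P n \<Longrightarrow> \<exists>m<n. eval r Q m"
proof (induction arbitrary: r n rule: red.induct)
  case (red_rep ys zs x B' D T B)
  have "\<exists>m<n. eval r (Def True x ys D (bind B' (ext (substd (sub ys zs) D) T))) m"
    if "eval r (Def True x ys D (bind B' (Tm (tplug T (Out x zs))))) n" for r n
    unfolding eval_Def_iff
    by (rule eval_call[where s = r]) (use red_rep.hyps that in \<open>auto simp: eval_Def_iff\<close>)
  then show ?case by (rule eval_bind_decrease[OF _ red_rep.prems])
next
  case (red_lin ys zs x B' D T B)
  have "\<exists>m<n. eval r (Nu x (bind B' (ext (substd (sub ys zs) D) T))) m"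
    if "eval r (Def False x ys D (bind B' (Tm (tplug T (Out x zs))))) n" for r n
  proof -
    have "\<exists>m<n. eval (r(x := Clo ys D r)) (bind B' (ext (substd (sub ys zs) D) T)) m"
      by (rule eval_call[where s = r]) (use red_lin.hyps that in \<open>auto simp: eval_Def_iff\<close>)
    then obtain m where "m < n"
      and "eval (r(x := Clo ys D r)) (bind B' (ext (substd (sub ys zs) D) T)) m"
      by blast
    txt \<open>The linear definition is consumed; binding \<open>x\<close> to an atom instead is never costlier.\<close>
    moreover have "approx_env m (r(x := Atom)) (r(x := Clo ys D r))"
      by (auto simp: approx_refl approx_Atom)
    ultimately show ?thesis
      unfolding eval_Nu_iff using eval_approx_env le_less_trans by blast
  qed
  then show ?case by (rule eval_bind_decrease[OF _ red_lin.prems])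
next
  case (red_cong P P' Q' Q)
  obtain n1 where "n1 \<le> n" "eval r P' n1"
    using cost_leD[of P' P r n r] scong_cost_le[OF red_cong.hyps(1)]
      red_cong.prems approx_refl by blast
  then obtain m1 where "m1 < n" "eval r Q' m1"
    using red_cong.IH less_le_trans by blast
  moreover obtain m where "m \<le> m1" "eval r Q m"
    using cost_leD[of Q Q' r m1 r] scong_cost_le[OF red_cong.hyps(3)]
      \<open>eval r Q' m1\<close> approx_refl by blast
  ultimately show ?case using le_less_trans by blast
qed


section \<open>Well-typed declarations have a cost\<close>

function good :: "ty \<Rightarrow> val \<Rightarrow> bool" where
  "good One v = True"
| "good (Ch As) v = (case v of Atom \<Rightarrow> True
     | Clo ys D s \<Rightarrow> length ys = length As \<and>
         (\<forall>vs. list_all2 good As vs \<longrightarrow> (\<exists>m. eval (upds s ys vs) D m)))"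
  by pat_completeness auto
termination
  by (relation "measure (\<lambda>(A, v). size A)") (auto simp: less_Suc_eq_le intro: size_list_estimation')

lemma good_Atom: "good A Atom"
  by (cases A) auto

lemma good_upds:
  "list_all2 good As vs \<Longrightarrow> length ys = length As \<Longrightarrow>
    \<forall>x A. G x = Some A \<longrightarrow> good A (r x) \<Longrightarrow>
    \<forall>x A. (G(ys [\<mapsto>] As)) x = Some A \<longrightarrow> good A (upds r ys vs x)"
proof (induction ys arbitrary: As vs G r)
  case (Cons y ys)
  then obtain A As' v vs' where As: "As = A # As'" and vs: "vs = v # vs'"
    and "good A v" and args: "list_all2 good As' vs'"
    by (cases As; cases vs) auto
  have "length ys = length As'" using Cons.prems(2) As by simp
  moreover have "\<forall>z B. (G(y \<mapsto> A)) z = Some B \<longrightarrow> good B ((r(y := v)) z)"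
    using Cons.prems(3) \<open>good A v\<close> by auto
  ultimately have "\<forall>z B. (G(y \<mapsto> A, ys [\<mapsto>] As')) z = Some B \<longrightarrow> good B (upds (r(y := v)) ys vs' z)"
    by (rule Cons.IH[OF args])
  then show ?case using As vs by simp
qed simp

lemma typt_eval: "typt G M \<Longrightarrow> \<forall>x A. G x = Some A \<longrightarrow> good A (r x) \<Longrightarrow> \<exists>n. eval_trm r M n"
proof (induction rule: typt.induct)
  case (typt_out ys G x As)
  have "good (Ch As) (r x)" using typt_out by blast
  moreover have "list_all2 good As (map r ys)"
    using typt_out.hyps(3) typt_out.prems by (auto simp: list_all2_conv_all_nth)
  ultimately have "\<exists>n. eval_app (r x) (map r ys) n"
  proof (cases "r x")
    case (Clo ys' D s)
    assume "good (Ch As) (r x)" and args: "list_all2 good As (map r ys)"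
    with Clo obtain m where "length ys' = length As" and "eval (upds s ys' (map r ys)) D m"
      by auto
    moreover have "length (map r ys) = length As" using list_all2_lengthD[OF args] by simp
    ultimately have "eval_app (Clo ys' D s) (map r ys) (Suc m)" by (intro eval_app_Clo) simp_all
    then show ?thesis using Clo by auto
  qed (auto intro: eval_app_Atom)
  then show ?case by (blast intro: eval_Out)
next
  case (typt_par G M1 M2)
  then show ?case by (blast intro: eval_Par)
qed

lemma typd_eval: "typd G D \<Longrightarrow> \<forall>x A. G x = Some A \<longrightarrow> good A (r x) \<Longrightarrow> \<exists>n. eval r D n"
proof (induction arbitrary: r rule: typd.induct)
  case (typd_nu G x A D)
  have "\<forall>y B. (G(x \<mapsto> A)) y = Some B \<longrightarrow> good B ((r(x := Atom)) y)"
    using typd_nu.prems by (auto simp: good_Atom)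
  then show ?case using typd_nu.IH by (simp add: eval_Nu_iff)
next
  case (typd_def ys As G D1 x D2 b)
  have "good (Ch As) (Clo ys D1 r)"
    using typd_def.hyps(2) typd_def.IH(1) good_upds typd_def.prems by simp
  then have "\<forall>z B. (G(x \<mapsto> Ch As)) z = Some B \<longrightarrow> good B ((r(x := Clo ys D1 r)) z)"
    using typd_def.prems by auto
  then show ?case using typd_def.IH(2) by (simp add: eval_Def_iff)
next
  case (typd_tm G M)
  then show ?case using typt_eval by (blast intro: eval_Tm)
qed


lemma eval_no_infinite_red: "eval r (f 0) n \<Longrightarrow> \<forall>k. f k \<longrightarrow>\<^sub>\<pi> f (Suc k) \<Longrightarrow> False"
proof (induction n arbitrary: f rule: less_induct)
  case (less n)
  then obtain m where "m < n" and "eval r (f (Suc 0)) m" using red_eval_decrease by blast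
  then show False using less.IH[of m "\<lambda>k. f (Suc k)"] less.prems(2) by simp
qed

theorem corollary3:
  fixes \<Gamma> :: "name \<rightharpoonup> ty" and D :: dcl
  assumes "finite (dom \<Gamma>)" and "typd \<Gamma> D"
  shows "\<not> (\<exists>f. f 0 = D \<and> (\<forall>n. f n \<longrightarrow>\<^sub>\<pi> f (Suc n)))"
proof
  assume "\<exists>f. f 0 = D \<and> (\<forall>n. f n \<longrightarrow>\<^sub>\<pi> f (Suc n))"
  then obtain f where "f 0 = D" and "\<forall>n. f n \<longrightarrow>\<^sub>\<pi> f (Suc n)" by blast
  moreover obtain c where "eval (\<lambda>_. Atom) D c"
    using typd_eval[OF assms(2), of "\<lambda>_. Atom"] by (auto simp: good_Atom)
  ultimately show False using eval_no_infinite_red by blast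
qed

end
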